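(* Let $b>1$ be an integer and let $\mu,\sigma$ be the digit mean and digit standard deviation of some generalized $b$-happy function $H$. Let $n$ be a positive integer satisfying bound (B): (B1) $4\left(1+3\mu+\sqrt{2}\,\sigma\, b^{5n/8}\right)\le b^{n-1}$, (B2) $\sqrt{3\mu b}\,\sigma\le b^{3n/8}$, (B3) $4\mu\left(3\mu+1+b^{3n/4}+2\sigma\mu^{-1/2}b^{5n/8}\right)\le b^{n-1}$. Let $\lambda=b^{n/8}$, let $a\in[b^{n-1},b^n]$, and define $f(x)=1+\frac34\mu x+\lambda\sigma\sqrt{\frac34 x}$ for $x\ge0$. Then there exists an integer $n_2$ such that - $\frac{b^{n-1}}{\mu}\le n_2\le\frac{4}{3\mu}b^n$, - $4\mid n_2$, - $0\le a-f(n_2)\le 3\mu+1$.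
   Context: A generalized $b$-happy function: fix an integer $b>1$ and non-negative integers $h(0),\dots,h(b-1)$ with $h(0)=0$, $h(1)=1$; for $n=\sum_{i=0}^k a_ib^i$ in base $b$, $H(n)=\sum_{i=0}^k h(a_i)$. Its digit mean is $\mu=\frac1b\sum_{j=0}^{b-1}h(j)$ and its digit variance is $\sigma^2=\frac1b\sum_{j=0}^{b-1}(h(j)-\mu)^2$, with $\sigma\ge0$. *)

theory Defs
  imports Complex_Main
begin

text \<open>A generalized b-happy function is determined by the digit values h(0..b-1),
  non-negative integers with h(0)=0 and h(1)=1.\<close>

definition happy_digits :: "nat \<Rightarrow> (nat \<Rightarrow> nat) \<Rightarrow> bool" where
  "happy_digits b h \<longleftrightarrow> b > 1 \<and> h 0 = 0 \<and> h 1 = 1"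

fun happy_H :: "nat \<Rightarrow> (nat \<Rightarrow> nat) \<Rightarrow> nat \<Rightarrow> nat" where
  "happy_H b h n = (if n = 0 \<or> b \<le> 1 then 0 else h (n mod b) + happy_H b h (n div b))"

definition digit_mean :: "nat \<Rightarrow> (nat \<Rightarrow> nat) \<Rightarrow> real" where
  "digit_mean b h = (1 / real b) * (\<Sum>j<b. real (h j))"

definition digit_variance :: "nat \<Rightarrow> (nat \<Rightarrow> nat) \<Rightarrow> real" where
  "digit_variance b h = (1 / real b) * (\<Sum>j<b. (real (h j) - digit_mean b h)\<^sup>2)"

definition digit_sd :: "nat \<Rightarrow> (nat \<Rightarrow> nat) \<Rightarrow> real" where
  "digit_sd b h = sqrt (digit_variance b h)"

end

theory Submission imports Defs begin

(* On the grid 4\<int>, the estimate f is increasing and, from x \<ge> b^(n-1)/\<mu> on, consecutive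
   values differ by at most 3\<mu> + 1: the linear part grows by exactly 3\<mu>, and the square-root
   part by at most 1 because (B2) gives 3 (\<lambda>\<sigma>)\<^sup>2 \<le> b^(n-1)/\<mu>. By (B1), f is still below
   b^(n-1) \<le> a one grid step above the lower end, and at the upper end (4/(3\<mu>)) b^n it exceeds
   b^n - 3\<mu>. Hence the largest grid point of the interval at which f \<le> a does the job. *)

lemma digit_mean_times_base_ge_one:
  assumes "happy_digits b h"
  shows "1 \<le> digit_mean b h * real b"
proof -
  have b: "b > 1" "h 1 = 1" using assms by (auto simp: happy_digits_def)
  have "real (h 1) \<le> (\<Sum>j<b. real (h j))"
    by (rule member_le_sum) (use b in auto)
  thus ?thesis using b by (simp add: digit_mean_def)
qed

lemma digit_sd_nonneg: "0 \<le> digit_sd b h"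
  unfolding digit_sd_def digit_variance_def by (simp add: sum_nonneg)

lemma sqrt_add_minus_sqrt_le:
  fixes x d :: real
  assumes "0 < x" "0 \<le> d"
  shows "sqrt (x + d) - sqrt x \<le> d / (2 * sqrt x)"
proof -
  define s t where "s = sqrt x" and "t = sqrt (x + d)"
  have "0 < s" "s \<le> t" using assms by (auto simp: s_def t_def)
  have "(t - s) * (t + s) = d"
    using assms by (simp add: s_def t_def algebra_simps)
  hence "t - s = d / (t + s)" using \<open>0 < s\<close> \<open>s \<le> t\<close> by (simp add: eq_divide_eq)
  also have "\<dots> \<le> d / (2 * s)"
    using \<open>0 < s\<close> \<open>s \<le> t\<close> assms(2) by (intro divide_left_mono) auto
  finally show ?thesis by (simp add: s_def t_def)
qed

lemma exists_grid_point_close_below: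
  fixes f :: "real \<Rightarrow> real" and c d L U a :: real
  assumes "mono f" and "0 < c"
    and step: "\<And>x. L \<le> x \<Longrightarrow> f (x + c) \<le> f x + d"
    and "L + c \<le> U" and "f (L + c) \<le> a" and "a \<le> f (U - c) + d"
  shows "\<exists>k::int. L \<le> c * k \<and> c * k \<le> U \<and> f (c * k) \<le> a \<and> a - f (c * k) \<le> d"
proof -
  define S where "S = {k::int. L \<le> c * k \<and> c * k \<le> U \<and> f (c * k) \<le> a}"
  define k0 where "k0 = \<lceil>L / c\<rceil>"
  have "L / c \<le> k0" "k0 < L / c + 1"
    unfolding k0_def by linarith+
  hence "L \<le> c * k0" "c * k0 < L + c"
    using \<open>0 < c\<close> by (simp_all add: field_simps)
  hence "k0 \<in> S"
    using assms(4,5) monoD[OF \<open>mono f\<close>, of "c * k0" "L + c"] by (auto simp: S_def)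
  have "S \<subseteq> {k0 .. \<lfloor>U / c\<rfloor>}"
    using \<open>0 < c\<close> by (auto simp: S_def k0_def ceiling_le_iff le_floor_iff field_simps)
  hence "finite S" by (rule finite_subset) simp
  define k where "k = Max S"
  have "k \<in> S" and k_max: "\<And>j. j \<in> S \<Longrightarrow> j \<le> k"
    using \<open>finite S\<close> \<open>k0 \<in> S\<close> unfolding k_def by (auto intro: Max_in)
  hence k: "L \<le> c * k" "c * k \<le> U" "f (c * k) \<le> a" by (auto simp: S_def)
  have "a - f (c * k) \<le> d"
  proof (cases "c * (k + 1) \<le> U")
    case True
    have "k + 1 \<notin> S" using k_max by fastforce
    hence "a < f (c * k + c)" using True k \<open>0 < c\<close> by (auto simp: S_def distrib_left)
    thus ?thesis using step[OF k(1)] by linarith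
  next
    case False
    hence "f (U - c) \<le> f (c * k)" by (intro monoD[OF \<open>mono f\<close>]) (simp add: distrib_left)
    thus ?thesis using assms(6) by linarith
  qed
  thus ?thesis using k by blast
qed

(* The function f of the statement, with c = \<lambda>\<sigma>. *)
definition digit_sum_estimate :: "real \<Rightarrow> real \<Rightarrow> real \<Rightarrow> real" where
  "digit_sum_estimate \<mu> c x = 1 + 3/4 * \<mu> * x + c * sqrt (3/4 * x)"

lemma mono_digit_sum_estimate:
  assumes "0 \<le> \<mu>" "0 \<le> c"
  shows "mono (digit_sum_estimate \<mu> c)"
  unfolding digit_sum_estimate_def
  by (rule monoI) (use assms in \<open>intro add_mono mult_left_mono, auto\<close>)

lemma digit_sum_estimate_step:
  assumes "0 \<le> c" "0 < x" "3 * c\<^sup>2 \<le> x"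
  shows "digit_sum_estimate \<mu> c (x + 4) \<le> digit_sum_estimate \<mu> c x + (3 * \<mu> + 1)"
proof -
  define y where "y = 3/4 * x"
  have "0 < y" using assms(2) by (simp add: y_def)
  have "(3 * c)\<^sup>2 \<le> 4 * y" using assms(3) by (simp add: y_def power_mult_distrib)
  hence "3 * c \<le> sqrt (4 * y)" by (rule real_le_rsqrt)
  hence "3 * c \<le> 2 * sqrt y" by (simp add: real_sqrt_mult)
  hence "c * (3 / (2 * sqrt y)) \<le> 1" using \<open>0 < y\<close> by (simp add: field_simps)
  moreover have "c * (sqrt (y + 3) - sqrt y) \<le> c * (3 / (2 * sqrt y))"
    using mult_left_mono[OF sqrt_add_minus_sqrt_le[OF \<open>0 < y\<close>, of 3] assms(1)] by simp
  ultimately have "c * sqrt (y + 3) \<le> c * sqrt y + 1" by (simp add: algebra_simps)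
  moreover have "c * sqrt (3/4 * (x + 4)) = c * sqrt (y + 3)" by (simp add: y_def algebra_simps)
  moreover have "3/4 * \<mu> * (x + 4) = 3/4 * \<mu> * x + 3 * \<mu>" by (simp add: algebra_simps)
  ultimately show ?thesis unfolding digit_sum_estimate_def y_def by linarith
qed

lemma scaled_sd_square_le:
  fixes B \<mu> \<sigma> q P :: real
  assumes "0 < \<mu>" "0 < B" "0 \<le> \<sigma>" "P * B = q ^ 8"
    and "sqrt (3 * \<mu> * B) * \<sigma> \<le> q ^ 3"
  shows "3 * (q * \<sigma>)\<^sup>2 \<le> P / \<mu>"
proof -
  have "3 * \<mu> * B * \<sigma>\<^sup>2 \<le> q ^ 6"
    using power_mono[OF assms(5), of 2] assms(1-3)
    by (simp add: power_mult_distrib flip: power_mult)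
  hence "q\<^sup>2 * (3 * \<mu> * B * \<sigma>\<^sup>2) \<le> q\<^sup>2 * q ^ 6" by (rule mult_left_mono) simp
  also have "\<dots> = P * B" using assms(4) by (simp flip: power_add)
  finally have "(3 * \<mu> * (q * \<sigma>)\<^sup>2) * B \<le> P * B" by (simp add: algebra_simps power_mult_distrib)
  thus ?thesis using assms(1,2) by (simp add: field_simps)
qed

lemma digit_sum_estimate_le_at_lower_end:
  fixes \<mu> \<sigma> q P a :: real
  assumes "0 < \<mu>" "0 \<le> \<sigma>" "0 < q" "P / \<mu> \<le> q ^ 8" "3 \<le> q ^ 8"
    and "4 * (1 + 3 * \<mu> + sqrt 2 * \<sigma> * q ^ 5) \<le> P" "P \<le> a"
  shows "digit_sum_estimate \<mu> (q * \<sigma>) (P / \<mu> + 4) \<le> a"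
proof -
  have "sqrt (3/4 * (P / \<mu> + 4)) \<le> sqrt (2 * (q ^ 4)\<^sup>2)"
    using assms(4,5) by (simp flip: power_mult)
  also have "\<dots> = sqrt 2 * q ^ 4"
    unfolding real_sqrt_mult real_sqrt_abs using assms(3) by simp
  finally have "q * \<sigma> * sqrt (3/4 * (P / \<mu> + 4)) \<le> q * \<sigma> * (sqrt 2 * q ^ 4)"
    using assms(2,3) by (intro mult_left_mono) auto
  also have "\<dots> = sqrt 2 * \<sigma> * q ^ 5" by (simp add: algebra_simps flip: power_Suc)
  finally have "q * \<sigma> * sqrt (3/4 * (P / \<mu> + 4)) \<le> sqrt 2 * \<sigma> * q ^ 5" .
  moreover have "3/4 * \<mu> * (P / \<mu> + 4) = 3/4 * P + 3 * \<mu>"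
    using assms(1) by (simp add: algebra_simps)
  ultimately show ?thesis using assms(6,7) unfolding digit_sum_estimate_def by argo
qed

lemma exists_grid_point_below_power:
  fixes B \<mu> \<sigma> q P a :: real
  defines "E \<equiv> digit_sum_estimate \<mu> (q * \<sigma>)"
  assumes "1 < B" "1 \<le> \<mu> * B" "0 \<le> \<sigma>" "0 < q" "P * B = q ^ 8"
    and bound1: "4 * (1 + 3 * \<mu> + sqrt 2 * \<sigma> * q ^ 5) \<le> P"
    and bound2: "sqrt (3 * \<mu> * B) * \<sigma> \<le> q ^ 3"
    and "P \<le> a" "a \<le> q ^ 8"
  shows "\<exists>k::int. P / \<mu> \<le> 4 * k \<and> 4 * k \<le> 4 / (3 * \<mu>) * q ^ 8
                 \<and> E (4 * k) \<le> a \<and> a - E (4 * k) \<le> 3 * \<mu> + 1"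
proof -
  define L U where "L = P / \<mu>" and "U = 4 / (3 * \<mu>) * q ^ 8"
  have "0 < \<mu> * B" using assms(3) by linarith
  hence "0 < \<mu>" using assms(2) by (simp add: zero_less_mult_iff)
  have "0 \<le> sqrt 2 * \<sigma> * q ^ 5" using assms(4,5) by simp
  hence P_ge: "4 + 12 * \<mu> \<le> P" using bound1 by (simp add: algebra_simps)
  have "P \<le> P * B" using assms(2) P_ge \<open>0 < \<mu>\<close> by simp
  hence "P \<le> q ^ 8" using assms(6) by simp
  have "P \<le> (\<mu> * B) * P" using assms(3) P_ge \<open>0 < \<mu>\<close> by simp
  also have "\<dots> = \<mu> * q ^ 8" using assms(6) by (simp add: mult_ac)
  finally have "L \<le> q ^ 8" using \<open>0 < \<mu>\<close> by (simp add: L_def field_simps)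
  have "0 < L" using P_ge \<open>0 < \<mu>\<close> by (simp add: L_def)
  have "3 * \<mu> * (L + 4) = 3 * P + 12 * \<mu>" using \<open>0 < \<mu>\<close> by (simp add: L_def field_simps)
  hence "3 * \<mu> * (L + 4) \<le> 4 * q ^ 8" using \<open>P \<le> q ^ 8\<close> P_ge by linarith
  hence "L + 4 \<le> U" using \<open>0 < \<mu>\<close> by (simp add: U_def field_simps)
  have "E (L + 4) \<le> a"
    unfolding E_def L_def using \<open>0 < \<mu>\<close> assms(4,5) \<open>L \<le> q ^ 8\<close> \<open>P \<le> q ^ 8\<close> P_ge bound1 \<open>P \<le> a\<close>
    by (intro digit_sum_estimate_le_at_lower_end) (auto simp: L_def)
  have "a \<le> E (U - 4) + (3 * \<mu> + 1)"
  proof -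
    have "3/4 * \<mu> * (U - 4) = q ^ 8 - 3 * \<mu>" using \<open>0 < \<mu>\<close> by (simp add: U_def field_simps)
    moreover have "0 \<le> q * \<sigma> * sqrt (3/4 * (U - 4))"
      using assms(4,5) \<open>0 < L\<close> \<open>L + 4 \<le> U\<close> by simp
    ultimately show ?thesis using \<open>a \<le> q ^ 8\<close> unfolding E_def digit_sum_estimate_def by linarith
  qed
  have "mono E" unfolding E_def using \<open>0 < \<mu>\<close> assms(4,5) by (simp add: mono_digit_sum_estimate)
  moreover have "E (x + 4) \<le> E x + (3 * \<mu> + 1)" if "L \<le> x" for x
    unfolding E_def using that \<open>0 < L\<close> scaled_sd_square_le[OF \<open>0 < \<mu>\<close> _ assms(4,6) bound2] assms(2,4,5)
    by (intro digit_sum_estimate_step) (auto simp: L_def)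
  ultimately show ?thesis
    using exists_grid_point_close_below[of E 4 L "3 * \<mu> + 1" U a] \<open>L + 4 \<le> U\<close>
      \<open>E (L + 4) \<le> a\<close> \<open>a \<le> E (U - 4) + (3 * \<mu> + 1)\<close> unfolding L_def U_def by auto
qed

theorem lemma6p2:
  fixes b n :: nat and h :: "nat \<Rightarrow> nat" and a :: real
  assumes hb: "happy_digits b h"
    and hn: "n > 0"
    and B1: "4 * (1 + 3 * digit_mean b h + sqrt 2 * digit_sd b h * real b powr (5 * real n / 8))
              \<le> real b ^ (n - 1)"
    and B2: "sqrt (3 * digit_mean b h * real b) * digit_sd b h \<le> real b powr (3 * real n / 8)"
    and B3: "4 * digit_mean b h * (3 * digit_mean b h + 1 + real b powr (3 * real n / 4)
              + 2 * digit_sd b h * digit_mean b h powr (-1/2) * real b powr (5 * real n / 8))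
              \<le> real b ^ (n - 1)"
    and ha: "real b ^ (n - 1) \<le> a" "a \<le> real b ^ n"
  shows "let \<mu> = digit_mean b h; \<sigma> = digit_sd b h; lam = real b powr (real n / 8);
             f = (\<lambda>x::real. 1 + 3/4 * \<mu> * x + lam * \<sigma> * sqrt (3/4 * x))
         in \<exists>n2::int. real b ^ (n - 1) / \<mu> \<le> real_of_int n2
                    \<and> real_of_int n2 \<le> 4 / (3 * \<mu>) * real b ^ n
                    \<and> 4 dvd n2
                    \<and> 0 \<le> a - f (real_of_int n2) \<and> a - f (real_of_int n2) \<le> 3 * \<mu> + 1"
proof -
  define q where "q = real b powr (real n / 8)"
  have "1 < real b" using hb by (simp add: happy_digits_def)
  hence "0 < q" by (simp add: q_def)
  have q_power: "q ^ k = real b powr (real k * real n / 8)" for k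
    using \<open>1 < real b\<close> by (simp add: q_def powr_power)
  have bn: "real b ^ n = q ^ 8"
    using \<open>1 < real b\<close> by (simp add: q_power powr_realpow)
  have P_times_b: "real b ^ (n - 1) * real b = q ^ 8"
    using hn by (simp add: bn flip: power_Suc2)
  have B1q: "4 * (1 + 3 * digit_mean b h + sqrt 2 * digit_sd b h * q ^ 5) \<le> real b ^ (n - 1)"
    using B1 by (simp add: q_power)
  have B2q: "sqrt (3 * digit_mean b h * real b) * digit_sd b h \<le> q ^ 3"
    using B2 by (simp add: q_power)
  obtain k :: int where k:
    "real b ^ (n - 1) / digit_mean b h \<le> 4 * real_of_int k"
    "4 * real_of_int k \<le> 4 / (3 * digit_mean b h) * q ^ 8"
    "digit_sum_estimate (digit_mean b h) (q * digit_sd b h) (4 * real_of_int k) \<le> a"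
    "a - digit_sum_estimate (digit_mean b h) (q * digit_sd b h) (4 * real_of_int k)
       \<le> 3 * digit_mean b h + 1"
    using exists_grid_point_below_power[OF \<open>1 < real b\<close> digit_mean_times_base_ge_one[OF hb]
      digit_sd_nonneg \<open>0 < q\<close> P_times_b B1q B2q ha(1)] ha(2) bn by auto
  show ?thesis
    unfolding Let_def
    by (rule exI[of _ "4 * k"]) (use k in \<open>simp add: bn digit_sum_estimate_def q_def\<close>)
qed

end
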